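(* Let $X$ be a $d$-uniform $\{\lambda_i\}$-two-sided local-spectral expander with all $\lambda_i>0$. Then for every $k<d$, the degree of the $k$-skeleton of $X$ satisfies \[\deg^{(k)}(X)\ge\frac{1}{(k-1)!}\prod_{i=1}^{k-1}\frac{1}{\lambda_i}.\]
   Context: $X$ is a $d$-uniform simplicial complex ($X(j)$ its faces of size $j$) with a full-support distribution on $X(d)$; links $X_t=\{s\setminus t:t\subseteq s\in X\}$ carry the induced distribution, and the graph underlying $X_t$ has vertices $X_t(1)$ and weighted edges $X_t(2)$. A weighted graph is a $\lambda$-two-sided expander if all nontrivial eigenvalues of its normalized adjacency operator lie in $[-\lambda,\lambda]$. $X$ is a $\{\lambda_i\}$-two-sided local-spectral expander if for every $i\le d-2$ and every $t\in X(i)$ the graph underlying $X_t$ is a $\lambda_i$-two-sided expander. The $k$-th degree is $\deg^{(k)}(X)=\max_{v\in X(1)}|\{s\in X(k):v\in s\}|$. *)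

theory Defs
  imports "HOL-Analysis.Analysis" "Jordan_Normal_Form.Char_Poly"
begin

definition faces :: "'a set set \<Rightarrow> nat \<Rightarrow> 'a set set" where
  "faces X j = {s \<in> X. card s = j}"

definition simplicial_complex :: "'a set set \<Rightarrow> bool" where
  "simplicial_complex X \<longleftrightarrow> finite X \<and> (\<forall>s\<in>X. finite s) \<and>
     (\<forall>s\<in>X. \<forall>t. t \<subseteq> s \<longrightarrow> t \<in> X)"

definition d_uniform :: "'a set set \<Rightarrow> nat \<Rightarrow> bool" where
  "d_uniform X d \<longleftrightarrow> simplicial_complex X \<and> faces X d \<noteq> {} \<and>
     (\<forall>s\<in>X. \<exists>f\<in>faces X d. s \<subseteq> f)"

definition full_support_distribution :: "'a set set \<Rightarrow> nat \<Rightarrow> ('a set \<Rightarrow> real) \<Rightarrow> bool" where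
  "full_support_distribution X d w \<longleftrightarrow>
     (\<forall>s\<in>faces X d. w s > 0) \<and> (\<Sum>s\<in>faces X d. w s) = 1"

definition link :: "'a set set \<Rightarrow> 'a set \<Rightarrow> 'a set set" where
  "link X t = {s - t | s. s \<in> X \<and> t \<subseteq> s}"

text \<open>Induced distribution on the j-faces of the link X_t: draw a top face f of X
containing t according to w (conditioned on f containing t), then a uniformly random
j-subset of f - t.\<close>
definition link_dist :: "'a set set \<Rightarrow> nat \<Rightarrow> ('a set \<Rightarrow> real) \<Rightarrow> 'a set \<Rightarrow> nat \<Rightarrow> 'a set \<Rightarrow> real" where
  "link_dist X d w t j a =
     (\<Sum>f\<in>{f \<in> faces X d. t \<union> a \<subseteq> f}. w f) /
     ((\<Sum>f\<in>{f \<in> faces X d. t \<subseteq> f}. w f) * real ((d - card t) choose j))"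

definition link_vertices :: "'a set set \<Rightarrow> 'a set \<Rightarrow> 'a set" where
  "link_vertices X t = {v. {v} \<in> faces (link X t) 1}"

definition link_edge_weight :: "'a set set \<Rightarrow> nat \<Rightarrow> ('a set \<Rightarrow> real) \<Rightarrow> 'a set \<Rightarrow> 'a \<Rightarrow> 'a \<Rightarrow> real" where
  "link_edge_weight X d w t u v =
     (if {u, v} \<in> faces (link X t) 2 then link_dist X d w t 2 {u, v} else 0)"

definition norm_adj :: "'a set set \<Rightarrow> nat \<Rightarrow> ('a set \<Rightarrow> real) \<Rightarrow> 'a set \<Rightarrow> 'a \<Rightarrow> 'a \<Rightarrow> real" where
  "norm_adj X d w t u v =
     link_edge_weight X d w t u v / (\<Sum>x\<in>link_vertices X t. link_edge_weight X d w t u x)"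

text \<open>Matrix of the normalized adjacency operator w.r.t. an (arbitrary) enumeration of the
vertex set; its spectrum does not depend on the enumeration.\<close>
definition enum_set :: "'a set \<Rightarrow> 'a list" where
  "enum_set V = (SOME xs. distinct xs \<and> set xs = V)"

definition norm_adj_mat :: "'a set set \<Rightarrow> nat \<Rightarrow> ('a set \<Rightarrow> real) \<Rightarrow> 'a set \<Rightarrow> real mat" where
  "norm_adj_mat X d w t =
     (let vs = enum_set (link_vertices X t)
      in mat (length vs) (length vs) (\<lambda>(i, j). norm_adj X d w t (vs ! i) (vs ! j)))"

text \<open>Eigenvalues with algebraic multiplicity (complex roots of the characteristic polynomial).\<close>
definition eigenvalues_mset :: "real mat \<Rightarrow> complex multiset" where
  "eigenvalues_mset A = proots (map_poly complex_of_real (char_poly A))"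

text \<open>lambda-two-sided expander: all nontrivial eigenvalues (all eigenvalues with one copy of the
trivial eigenvalue 1 removed) lie in [-lambda, lambda].\<close>
definition two_sided_expander :: "real mat \<Rightarrow> real \<Rightarrow> bool" where
  "two_sided_expander A lam \<longleftrightarrow>
     (\<forall>z \<in># eigenvalues_mset A - {#1#}. Im z = 0 \<and> - lam \<le> Re z \<and> Re z \<le> lam)"

definition local_spectral_expander ::
  "'a set set \<Rightarrow> nat \<Rightarrow> ('a set \<Rightarrow> real) \<Rightarrow> (nat \<Rightarrow> real) \<Rightarrow> bool" where
  "local_spectral_expander X d w lam \<longleftrightarrow>
     (\<forall>i \<le> d - 2. \<forall>t \<in> faces X i. two_sided_expander (norm_adj_mat X d w t) (lam i))"

definition kdeg :: "'a set set \<Rightarrow> nat \<Rightarrow> nat" where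
  "kdeg X k = Max {card {s \<in> faces X k. v \<in> s} | v. {v} \<in> faces X 1}"

end

theory Submission
  imports Defs "Jordan_Normal_Form.Schur_Decomposition"
begin

text \<open>
  The normalized adjacency matrix of the link of a face t has zero diagonal and row sums 1,
  so its eigenvalues sum to its trace 0 and one of them is 1. The other n - 1 eigenvalues,
  n the number of vertices of the link, sum to -1 and are each at least -\<lambda>; hence
  n \<ge> 1 + 1/\<lambda>. Let N(t) be the number of k-faces containing t. A k-face containing the
  j-face t contains t \<union> {u} for at most k - j link vertices u, so
  (k - j) N(t) \<ge> \<Sum>_u N(t \<union> {u}) \<ge> (1/\<lambda>(j)) min_u N(t \<union> {u}).
  Iterating from a vertex up to size k gives the bound.
\<close>

section \<open>Trace and eigenvalues\<close>

definition mat_trace :: "'a::comm_ring_1 mat \<Rightarrow> 'a" where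
  "mat_trace A = (\<Sum>i<dim_row A. A $$ (i, i))"

lemma mat_trace_mult_comm:
  assumes "A \<in> carrier_mat n m" and "B \<in> carrier_mat m n"
  shows "mat_trace (A * B) = mat_trace (B * A)"
proof -
  have "mat_trace (A * B) = (\<Sum>i<n. \<Sum>j<m. A $$ (i, j) * B $$ (j, i))"
    using assms by (auto simp: mat_trace_def scalar_prod_def lessThan_atLeast0 intro!: sum.cong)
  also have "\<dots> = (\<Sum>j<m. \<Sum>i<n. B $$ (j, i) * A $$ (i, j))"
    by (subst sum.swap) (simp add: mult.commute)
  also have "\<dots> = mat_trace (B * A)"
    using assms by (auto simp: mat_trace_def scalar_prod_def lessThan_atLeast0 intro!: sum.cong)
  finally show ?thesis .
qed

lemma mat_trace_similar:
  assumes "similar_mat A B"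
  shows "mat_trace A = mat_trace B"
proof -
  obtain n P Q where carrier: "{A, B, P, Q} \<subseteq> carrier_mat n n"
    and inv: "Q * P = 1\<^sub>m n" and A: "A = P * B * Q"
    using similar_matD[OF assms] by blast
  have "mat_trace A = mat_trace (Q * (P * B))"
    unfolding A using carrier by (intro mat_trace_mult_comm) auto
  also have "Q * (P * B) = (Q * P) * B"
    using carrier by (intro assoc_mult_mat[symmetric]) auto
  also have "\<dots> = B"
    using carrier inv by (auto simp: left_mult_one_mat)
  finally show ?thesis .
qed

lemma sum_list_diag_mat: "sum_list (diag_mat A) = mat_trace A"
  by (simp add: diag_mat_def mat_trace_def sum_list_distinct_conv_sum_set atLeast0LessThan)

lemma proots_linear_factors: "proots (\<Prod>a\<leftarrow>as. [:- a, 1:]) = mset (as :: 'a::idom list)"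
proof (induction as)
  case (Cons a as)
  have "(\<Prod>a\<leftarrow>as. [:- a, 1:]) \<noteq> 0"
    by (auto simp: prod_list_zero_iff)
  with Cons.IH show ?case
    by (simp add: proots_mult del: mult_pCons_left)
qed simp

lemma proots_char_poly_complex:
  fixes A :: "complex mat"
  assumes A: "A \<in> carrier_mat n n"
  shows "size (proots (char_poly A)) = n" and "sum_mset (proots (char_poly A)) = mat_trace A"
proof -
  obtain as where "char_poly A = (\<Prod>a\<leftarrow>as. [:- a, 1:])"
    using char_poly_factorized[OF A] by blast
  then obtain B where B: "B \<in> carrier_mat n n" "upper_triangular B" "similar_mat A B"
    using schur_decomposition_exists[OF A] by blast
  have roots: "proots (char_poly A) = mset (diag_mat B)"
    using char_poly_similar[OF B(3)] char_poly_upper_triangular[OF B(1,2)]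
    by (simp add: proots_linear_factors)
  show "size (proots (char_poly A)) = n"
    unfolding roots using B(1) by (simp add: diag_mat_def)
  show "sum_mset (proots (char_poly A)) = mat_trace A"
    unfolding roots mat_trace_similar[OF B(3)] by (simp add: sum_mset_sum_list sum_list_diag_mat)
qed

lemma eigenvalues_mset_size_sum:
  fixes A :: "real mat"
  assumes A: "A \<in> carrier_mat n n"
  shows "size (eigenvalues_mset A) = n"
    and "sum_mset (eigenvalues_mset A) = complex_of_real (mat_trace A)"
proof -
  define Ac where "Ac = map_mat complex_of_real A"
  have Ac: "Ac \<in> carrier_mat n n"
    using A by (simp add: Ac_def)
  have eig: "eigenvalues_mset A = proots (char_poly Ac)"
    unfolding eigenvalues_mset_def Ac_def of_real_hom.char_poly_hom[OF A] ..
  show "size (eigenvalues_mset A) = n"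
    unfolding eig by (rule proots_char_poly_complex(1)[OF Ac])
  have "mat_trace Ac = complex_of_real (mat_trace A)"
    using A by (simp add: Ac_def mat_trace_def)
  then show "sum_mset (eigenvalues_mset A) = complex_of_real (mat_trace A)"
    unfolding eig proots_char_poly_complex(2)[OF Ac] .
qed

lemma eigenvalue_in_eigenvalues_mset:
  fixes A :: "real mat"
  assumes A: "A \<in> carrier_mat n n" and "eigenvalue A x"
  shows "complex_of_real x \<in># eigenvalues_mset A"
proof -
  have "char_poly A \<noteq> 0"
    using degree_monic_char_poly[OF A] by auto
  moreover have "poly (char_poly A) x = 0"
    using assms eigenvalue_root_char_poly[OF A] by simp
  ultimately show ?thesis
    unfolding eigenvalues_mset_def by simp
qed

lemma eigenvalue_one_if_row_sums_one:
  fixes A :: "'a::comm_ring_1 mat"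
  assumes A: "A \<in> carrier_mat n n" and "0 < n"
    and rows: "\<And>i. i < n \<Longrightarrow> (\<Sum>j<n. A $$ (i, j)) = 1"
  shows "eigenvalue A 1"
proof -
  define ones where "ones = vec n (\<lambda>_. 1 :: 'a)"
  have "A *\<^sub>v ones = ones"
    using A rows by (intro eq_vecI) (auto simp: ones_def scalar_prod_def lessThan_atLeast0)
  moreover have "ones \<noteq> 0\<^sub>v n"
    using \<open>0 < n\<close> by (auto simp: ones_def vec_eq_iff)
  ultimately show ?thesis
    using A unfolding eigenvalue_def eigenvector_def by (intro exI[of _ ones]) (auto simp: ones_def)
qed

lemma traceless_two_sided_expander_dim_ge:
  fixes A :: "real mat"
  assumes A: "A \<in> carrier_mat n n" and trace: "mat_trace A = 0"
    and "eigenvalue A 1" and "two_sided_expander A lam"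
  shows "1 \<le> lam * (real n - 1)"
proof -
  define R where "R = eigenvalues_mset A - {#1#}"
  have "1 \<in># eigenvalues_mset A"
    using eigenvalue_in_eigenvalues_mset[OF A \<open>eigenvalue A 1\<close>] by simp
  then have split: "eigenvalues_mset A = add_mset 1 R"
    unfolding R_def by simp
  have n: "n = Suc (size R)"
    using eigenvalues_mset_size_sum(1)[OF A] unfolding split by simp
  have "sum_mset R = -1"
    using eigenvalues_mset_size_sum(2)[OF A] unfolding split trace by (simp add: add_eq_0_iff)
  moreover have "Re (sum_mset R) = (\<Sum>z\<in>#R. Re z)"
    by (induction R) auto
  ultimately have "-1 = (\<Sum>z\<in>#R. Re z)"
    by simp
  also have "\<dots> \<ge> (\<Sum>z\<in>#R. - lam)"
    using \<open>two_sided_expander A lam\<close> unfolding two_sided_expander_def split R_def[symmetric]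
    by (intro sum_mset_mono) auto
  finally show ?thesis
    unfolding n by (simp add: mult.commute)
qed

section \<open>Links of pure simplicial complexes\<close>

lemma simplicial_complex_downward_closed:
  "simplicial_complex X \<Longrightarrow> s \<in> X \<Longrightarrow> r \<subseteq> s \<Longrightarrow> r \<in> X"
  unfolding simplicial_complex_def by blast

lemma simplicial_complex_finite_face: "simplicial_complex X \<Longrightarrow> s \<in> X \<Longrightarrow> finite s"
  unfolding simplicial_complex_def by blast

lemma simplicial_complex_finite: "simplicial_complex X \<Longrightarrow> finite X"
  unfolding simplicial_complex_def by blast

lemma d_uniform_simplicial_complex: "d_uniform X d \<Longrightarrow> simplicial_complex X"
  by (simp add: d_uniform_def)

lemma d_uniform_face_extends:
  assumes X: "d_uniform X d" and s: "s \<in> X" "card s < d"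
  obtains x f where "x \<notin> s" "f \<in> faces X d" "insert x s \<subseteq> f"
proof -
  obtain f where f: "f \<in> faces X d" "s \<subseteq> f"
    using X s unfolding d_uniform_def by blast
  have "finite s"
    using X s by (blast intro: simplicial_complex_finite_face d_uniform_simplicial_complex)
  have "\<not> f \<subseteq> s"
  proof
    assume "f \<subseteq> s"
    with \<open>finite s\<close> have "card f \<le> card s"
      by (rule card_mono)
    with f s(2) show False
      by (simp add: faces_def)
  qed
  then obtain x where "x \<in> f" "x \<notin> s"
    by blast
  with f that show thesis
    by blast
qed

lemma link_vertices_iff: "u \<in> link_vertices X t \<longleftrightarrow> u \<notin> t \<and> insert u t \<in> X"
proof
  assume "u \<in> link_vertices X t"
  then obtain s where "{u} = s - t" "s \<in> X" "t \<subseteq> s"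
    unfolding link_vertices_def faces_def link_def by auto
  moreover from this have "s = insert u t"
    by blast
  ultimately show "u \<notin> t \<and> insert u t \<in> X"
    by blast
next
  assume "u \<notin> t \<and> insert u t \<in> X"
  moreover from this have "{u} = insert u t - t"
    by blast
  ultimately show "u \<in> link_vertices X t"
    unfolding link_vertices_def faces_def link_def by auto
qed

lemma finite_link_vertices:
  assumes "simplicial_complex X"
  shows "finite (link_vertices X t)"
proof (rule finite_subset)
  show "link_vertices X t \<subseteq> \<Union>X"
    by (auto simp: link_vertices_iff)
  show "finite (\<Union>X)"
    using assms by (auto simp: simplicial_complex_finite simplicial_complex_finite_face)
qed

lemma link_vertices_nonempty:
  assumes X: "d_uniform X d" and t: "t \<in> X" "card t < d"
  shows "link_vertices X t \<noteq> {}"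
proof -
  obtain x f where x: "x \<notin> t" and f: "f \<in> faces X d" "insert x t \<subseteq> f"
    using d_uniform_face_extends[OF X t] .
  have "f \<in> X"
    using f by (simp add: faces_def)
  with f have "insert x t \<in> X"
    by (blast intro: simplicial_complex_downward_closed d_uniform_simplicial_complex[OF X])
  with x have "x \<in> link_vertices X t"
    by (simp add: link_vertices_iff)
  then show ?thesis
    by blast
qed

lemma link_dist_nonneg:
  assumes "full_support_distribution X d w"
  shows "link_dist X d w t j a \<ge> 0"
proof -
  have "w f \<ge> 0" if "f \<in> faces X d" for f
    using assms that by (simp add: full_support_distribution_def less_imp_le)
  then show ?thesis
    unfolding link_dist_def by (auto intro!: divide_nonneg_nonneg mult_nonneg_nonneg sum_nonneg)
qed

lemma sum_full_support_pos:
  assumes "finite X" and w: "full_support_distribution X d w"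
    and "f \<in> faces X d" and "P f"
  shows "0 < (\<Sum>g\<in>{g \<in> faces X d. P g}. w g)"
proof -
  have pos: "w g > 0" if "g \<in> faces X d" for g
    using w that by (simp add: full_support_distribution_def)
  have "0 < w f"
    using pos assms(3) .
  also have "w f \<le> (\<Sum>g\<in>{g \<in> faces X d. P g}. w g)"
    using assms pos by (intro member_le_sum) (auto simp: faces_def intro: less_imp_le)
  finally show ?thesis .
qed

lemma link_dist_pos:
  assumes "finite X" and w: "full_support_distribution X d w"
    and f: "f \<in> faces X d" "t \<union> a \<subseteq> f" and "j \<le> d - card t"
  shows "link_dist X d w t j a > 0"
proof -
  have "0 < (\<Sum>g\<in>{g \<in> faces X d. t \<union> a \<subseteq> g}. w g)"
    using f by (intro sum_full_support_pos[OF \<open>finite X\<close> w])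
  moreover have "0 < (\<Sum>g\<in>{g \<in> faces X d. t \<subseteq> g}. w g)"
    using f by (intro sum_full_support_pos[OF \<open>finite X\<close> w]) auto
  moreover have "0 < real ((d - card t) choose j)"
    using \<open>j \<le> d - card t\<close> by simp
  ultimately show ?thesis
    unfolding link_dist_def by (intro divide_pos_pos mult_pos_pos)
qed

lemma link_edge_weight_self: "link_edge_weight X d w t u u = 0"
  by (simp add: link_edge_weight_def faces_def)

lemma link_edge_weight_nonneg:
  "full_support_distribution X d w \<Longrightarrow> link_edge_weight X d w t u v \<ge> 0"
  by (simp add: link_edge_weight_def link_dist_nonneg)

lemma link_weighted_degree_pos:
  assumes X: "d_uniform X d" and w: "full_support_distribution X d w"
    and "card t + 2 \<le> d" and u: "u \<in> link_vertices X t"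
  shows "(\<Sum>x\<in>link_vertices X t. link_edge_weight X d w t u x) > 0"
proof -
  have sc: "simplicial_complex X"
    using X by (rule d_uniform_simplicial_complex)
  have ut: "u \<notin> t" "insert u t \<in> X"
    using u by (auto simp: link_vertices_iff)
  then have "finite t"
    using simplicial_complex_finite_face[OF sc ut(2)] by simp
  then have "card (insert u t) < d"
    using ut \<open>card t + 2 \<le> d\<close> by simp
  then obtain x f where x: "x \<notin> insert u t" and f: "f \<in> faces X d" "insert x (insert u t) \<subseteq> f"
    using d_uniform_face_extends[OF X ut(2)] by blast
  have fX: "f \<in> X"
    using f by (simp add: faces_def)
  have "t \<union> {u, x} \<in> X"
    using f by (intro simplicial_complex_downward_closed[OF sc fX]) auto
  moreover have "{u, x} = (t \<union> {u, x}) - t"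
    using x ut by blast
  ultimately have "{u, x} \<in> link X t"
    unfolding link_def by blast
  moreover have "card {u, x} = 2"
    using x by (auto simp: card_insert_if)
  ultimately have edge: "{u, x} \<in> faces (link X t) 2"
    by (simp add: faces_def)
  have "insert x t \<in> X"
    using f by (intro simplicial_complex_downward_closed[OF sc fX]) auto
  with x have xL: "x \<in> link_vertices X t"
    by (simp add: link_vertices_iff)
  have "0 < link_dist X d w t 2 {u, x}"
    using f \<open>card t + 2 \<le> d\<close> by (intro link_dist_pos[OF simplicial_complex_finite[OF sc] w]) auto
  also have "\<dots> = link_edge_weight X d w t u x"
    using edge by (simp add: link_edge_weight_def)
  also have "\<dots> \<le> (\<Sum>y\<in>link_vertices X t. link_edge_weight X d w t u y)"
    using xL finite_link_vertices[OF sc] link_edge_weight_nonneg[OF w]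
    by (intro member_le_sum) auto
  finally show ?thesis .
qed

lemma sum_norm_adj:
  assumes "d_uniform X d" and "full_support_distribution X d w"
    and "card t + 2 \<le> d" and "u \<in> link_vertices X t"
  shows "(\<Sum>x\<in>link_vertices X t. norm_adj X d w t u x) = 1"
  using link_weighted_degree_pos[OF assms]
  by (simp add: norm_adj_def sum_divide_distrib[symmetric])

lemma enum_set_spec:
  assumes "finite V"
  shows "distinct (enum_set V) \<and> set (enum_set V) = V"
  unfolding enum_set_def by (rule someI_ex) (use finite_distinct_list[OF assms] in auto)

lemma norm_adj_mat_carrier:
  assumes "simplicial_complex X"
  shows "norm_adj_mat X d w t
    \<in> carrier_mat (card (link_vertices X t)) (card (link_vertices X t))"
  using enum_set_spec[OF finite_link_vertices[OF assms, of t]]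
  by (simp add: norm_adj_mat_def Let_def distinct_card[symmetric])

lemma mat_trace_norm_adj_mat: "mat_trace (norm_adj_mat X d w t) = 0"
  by (simp add: mat_trace_def norm_adj_mat_def Let_def norm_adj_def link_edge_weight_self)

lemma eigenvalue_one_norm_adj_mat:
  assumes X: "d_uniform X d" and w: "full_support_distribution X d w"
    and t: "t \<in> X" "card t + 2 \<le> d"
  shows "eigenvalue (norm_adj_mat X d w t) 1"
proof -
  let ?L = "link_vertices X t"
  define vs where "vs = enum_set ?L"
  have vs: "distinct vs" "set vs = ?L"
    using enum_set_spec[OF finite_link_vertices[OF d_uniform_simplicial_complex[OF X]]]
    by (simp_all add: vs_def)
  have A: "norm_adj_mat X d w t
      = mat (length vs) (length vs) (\<lambda>(i, j). norm_adj X d w t (vs ! i) (vs ! j))"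
    by (simp add: norm_adj_mat_def vs_def Let_def)
  have rows: "(\<Sum>j<length vs. norm_adj X d w t (vs ! i) (vs ! j)) = 1" if "i < length vs" for i
  proof -
    have "(\<Sum>j<length vs. norm_adj X d w t (vs ! i) (vs ! j))
        = (\<Sum>x\<in>?L. norm_adj X d w t (vs ! i) x)"
      using bij_betw_nth[OF vs(1) refl vs(2)[symmetric]] by (rule sum.reindex_bij_betw)
    also have "\<dots> = 1"
      using that vs(2) nth_mem by (intro sum_norm_adj[OF X w t(2)]) blast
    finally show ?thesis .
  qed
  have "0 < length vs"
    using vs(2) link_vertices_nonempty[OF X t(1)] t(2) by auto
  with rows show ?thesis
    unfolding A by (intro eigenvalue_one_if_row_sums_one) auto
qed

lemma card_link_vertices_ge:
  assumes X: "d_uniform X d" and w: "full_support_distribution X d w"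
    and t: "t \<in> X" "card t + 2 \<le> d"
    and "two_sided_expander (norm_adj_mat X d w t) lam" and "lam > 0"
  shows "1 + 1 / lam \<le> real (card (link_vertices X t))"
proof -
  have "1 \<le> lam * (real (card (link_vertices X t)) - 1)"
    using norm_adj_mat_carrier[OF d_uniform_simplicial_complex[OF X]] mat_trace_norm_adj_mat
      eigenvalue_one_norm_adj_mat[OF X w t] assms(5)
    by (rule traceless_two_sided_expander_dim_ge)
  with \<open>lam > 0\<close> show ?thesis
    by (simp add: field_simps)
qed

section \<open>Counting cofaces\<close>

definition cofaces :: "'a set set \<Rightarrow> nat \<Rightarrow> 'a set \<Rightarrow> 'a set set" where
  "cofaces X k t = {s \<in> faces X k. t \<subseteq> s}"

lemma finite_cofaces: "finite X \<Longrightarrow> finite (cofaces X k t)"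
  by (simp add: cofaces_def faces_def)

lemma sum_card_cofaces_insert_le:
  assumes X: "simplicial_complex X" and "finite t" and L: "finite L" "L \<inter> t = {}"
  shows "(\<Sum>u\<in>L. card (cofaces X k (insert u t))) \<le> (k - card t) * card (cofaces X k t)"
proof -
  let ?C = "cofaces X k t"
  have "(\<Sum>u\<in>L. card (cofaces X k (insert u t))) = (\<Sum>u\<in>L. card {s \<in> ?C. u \<in> s})"
    by (rule sum.cong) (auto simp: cofaces_def intro!: arg_cong[where f = card])
  also have "\<dots> = (\<Sum>s\<in>?C. card (L \<inter> s))"
    using L(1) finite_cofaces[OF simplicial_complex_finite[OF X]]
    by (intro sum_multicount_gen) (auto simp: Int_def)
  also have "\<dots> \<le> (\<Sum>s\<in>?C. k - card t)"
  proof (rule sum_mono)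
    fix s
    assume s: "s \<in> ?C"
    then have "finite s" "card s = k" "t \<subseteq> s"
      using X by (auto simp: cofaces_def faces_def simplicial_complex_finite_face)
    have "card (L \<inter> s) \<le> card (s - t)"
      using L(2) \<open>finite s\<close> by (intro card_mono) auto
    also have "\<dots> = k - card t"
      using \<open>finite t\<close> \<open>card s = k\<close> \<open>t \<subseteq> s\<close> by (simp add: card_Diff_subset)
    finally show "card (L \<inter> s) \<le> k - card t" .
  qed
  finally show ?thesis
    by (simp add: mult.commute)
qed

lemma card_link_vertices_mult_le:
  assumes X: "simplicial_complex X" and "t \<in> X"
    and bound: "\<And>u. u \<in> link_vertices X t \<Longrightarrow> B \<le> real (card (cofaces X k (insert u t)))"
  shows "real (card (link_vertices X t)) * B \<le> real (k - card t) * real (card (cofaces X k t))"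
proof -
  have "finite t"
    using X \<open>t \<in> X\<close> by (rule simplicial_complex_finite_face)
  have "real (card (link_vertices X t)) * B
      \<le> (\<Sum>u\<in>link_vertices X t. real (card (cofaces X k (insert u t))))"
    using bound by (rule sum_bounded_below)
  also have "\<dots> \<le> real (k - card t) * real (card (cofaces X k t))"
    using sum_card_cofaces_insert_le[OF X \<open>finite t\<close> finite_link_vertices[OF X, of t], of k]
    by (simp add: link_vertices_iff disjoint_iff flip: of_nat_sum of_nat_mult)
  finally show ?thesis .
qed

lemma card_cofaces_ge:
  assumes X: "d_uniform X d" and w: "full_support_distribution X d w"
    and lse: "local_spectral_expander X d w lam" and lam: "\<forall>i \<le> d - 2. lam i > 0"
    and "k < d" and "j \<le> k" and "t \<in> faces X j"
  shows "(\<Prod>i = j..<k. 1 / lam i) / fact (k - j) \<le> real (card (cofaces X k t))"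
  using \<open>j \<le> k\<close> \<open>t \<in> faces X j\<close>
proof (induction j arbitrary: t rule: inc_induct)
  case base
  then have "t \<in> cofaces X k t"
    by (simp add: cofaces_def)
  then have "card (cofaces X k t) \<noteq> 0"
    using finite_cofaces[OF simplicial_complex_finite[OF d_uniform_simplicial_complex[OF X]]]
    by auto
  then show ?case
    by simp
next
  case (step j)
  let ?L = "link_vertices X t"
  define P where "P = (\<Prod>i = Suc j..<k. 1 / lam i)"
  have sc: "simplicial_complex X"
    using X by (rule d_uniform_simplicial_complex)
  have t: "t \<in> X" "card t = j"
    using step.prems by (simp_all add: faces_def)
  have "j \<le> d - 2"
    using step.hyps \<open>k < d\<close> by simp
  then have "lam j > 0" "two_sided_expander (norm_adj_mat X d w t) (lam j)"
    using lam lse step.prems by (auto simp: local_spectral_expander_def)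
  then have link: "1 / lam j \<le> real (card ?L)"
    using card_link_vertices_ge[OF X w t(1)] t(2) step.hyps \<open>k < d\<close> by force
  have "P / fact (k - Suc j) \<le> real (card (cofaces X k (insert u t)))" if "u \<in> ?L" for u
  proof -
    have "finite t"
      using sc t(1) by (rule simplicial_complex_finite_face)
    with that t have "insert u t \<in> faces X (Suc j)"
      by (simp add: link_vertices_iff faces_def)
    then show ?thesis
      unfolding P_def by (rule step.IH)
  qed
  then have count: "real (card ?L) * (P / fact (k - Suc j))
      \<le> real (k - j) * real (card (cofaces X k t))"
    using card_link_vertices_mult_le[OF sc t(1)] t(2) by blast
  have "P \<ge> 0"
    unfolding P_def using lam \<open>k < d\<close> by (intro prod_nonneg) (auto intro: less_imp_le)
  have "(\<Prod>i = j..<k. 1 / lam i) / fact (k - j) = 1 / lam j * (P / fact (k - Suc j)) / real (k - j)"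
    using step.hyps by (simp add: P_def prod.atLeast_Suc_lessThan fact_reduce[of "k - j"])
  also have "\<dots> \<le> real (card ?L) * (P / fact (k - Suc j)) / real (k - j)"
    using link \<open>P \<ge> 0\<close> by (intro divide_right_mono mult_right_mono) auto
  also have "\<dots> \<le> real (card (cofaces X k t))"
    using count step.hyps by (simp add: pos_divide_le_eq mult_ac)
  finally show ?case .
qed

lemma d_uniform_vertex_exists:
  assumes X: "d_uniform X d" and "0 < d"
  obtains v where "{v} \<in> faces X 1"
proof -
  obtain f where f: "f \<in> X" "card f = d"
    using X by (auto simp: d_uniform_def faces_def)
  then obtain v where "v \<in> f"
    using \<open>0 < d\<close> by fastforce
  with f have "{v} \<in> X"
    using simplicial_complex_downward_closed[OF d_uniform_simplicial_complex[OF X]] by blast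
  then show thesis
    by (intro that) (simp add: faces_def)
qed

lemma card_cofaces_vertex_le_kdeg:
  assumes "finite X" and "{v} \<in> faces X 1"
  shows "card (cofaces X k {v}) \<le> kdeg X k"
proof -
  let ?deg = "\<lambda>v. card {s \<in> faces X k. v \<in> s}"
  have "finite ((\<lambda>v. {v}) -` faces X 1)"
    using assms(1) by (intro finite_vimageI) (simp_all add: faces_def)
  then have "finite {?deg v | v. {v} \<in> faces X 1}"
    by (simp add: setcompr_eq_image vimage_def)
  moreover have "card (cofaces X k {v}) \<in> {?deg v | v. {v} \<in> faces X 1}"
    using assms(2) by (auto simp: cofaces_def)
  ultimately show ?thesis
    unfolding kdeg_def by (rule Max_ge)
qed

theorem mainTheorem15:
  fixes X :: "'a set set" and d k :: nat and w :: "'a set \<Rightarrow> real" and lam :: "nat \<Rightarrow> real"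
  assumes "d_uniform X d"
    and "full_support_distribution X d w"
    and "local_spectral_expander X d w lam"
    and "\<forall>i \<le> d - 2. lam i > 0"
    and "1 \<le> k" and "k < d"
  shows "real (kdeg X k) \<ge> (1 / fact (k - 1)) * (\<Prod>i = 1..k - 1. 1 / lam i)"
proof -
  obtain v where v: "{v} \<in> faces X 1"
    using d_uniform_vertex_exists[OF assms(1)] assms(6) by blast
  have "(1 / fact (k - 1)) * (\<Prod>i = 1..k - 1. 1 / lam i) = (\<Prod>i = 1..<k. 1 / lam i) / fact (k - 1)"
    using assms(5) by (cases k) (simp_all add: atLeastLessThanSuc_atLeastAtMost)
  also have "\<dots> \<le> real (card (cofaces X k {v}))"
    using card_cofaces_ge[OF assms(1-4,6,5) v] .
  also have "\<dots> \<le> real (kdeg X k)"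
    using card_cofaces_vertex_le_kdeg[OF simplicial_complex_finite v]
      d_uniform_simplicial_complex[OF assms(1)] by simp
  finally show ?thesis .
qed

end
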